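(* For every $p\in\Delta(\Omega)\setminus I$, there is a splitting $\mu\in\mathcal{S}(p)$ supported on at most two points that attains the maximum in $V_\delta(p)=\max_{\mu\in\mathcal{S}(p)}\{(1-\delta)\mu(\{q\in I\})+\delta\,\mathbb{E}_\mu[V_\delta(\phi(q))]\}$.
   Context: Let $\Omega$ be a finite set, identify each $\omega$ with a unit vector of $\mathbb{R}^\Omega$ and $\Delta(\Omega)$ with the unit simplex. Let $M$ be the transition matrix of an irreducible Markov chain on $\Omega$, $r:\Omega\to\mathbb{R}$, $\delta\in[0,1)$. Let $I=\{p\in\Delta(\Omega):\sum_\omega p(\omega)r(\omega)\ge0\}$ and $\phi(q)=qM$. $\mathcal{S}(p)$ is the set of Borel probability measures on $\Delta(\Omega)$ with mean $p$. $V_\delta$ is the value of the advisor's problem: at each stage, at belief $p_n$, choose $\mu\in\mathcal{S}(p_n)$, draw a posterior $q_n\sim\mu$, receive $\mathbf{1}_{\{q_n\in I\}}$, and move to $p_{n+1}=\phi(q_n)$, with payoff $\mathbb{E}[(1-\delta)\sum_n\delta^{n-1}\mathbf{1}_{\{q_n\in I\}}]$; $V_\delta$ is the unique solution of the dynamic programming equation in the claim. *)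

theory Defs
  imports "HOL-Analysis.Analysis" "HOL-Probability.Probability"
begin

definition belief_simplex :: "(real^'n::finite) set" where
  "belief_simplex = {p. (\<forall>i. 0 \<le> p $ i) \<and> (\<Sum>i\<in>UNIV. p $ i) = 1}"

definition stochastic_matrix :: "real^'n::finite^'n \<Rightarrow> bool" where
  "stochastic_matrix M \<longleftrightarrow> (\<forall>i j. 0 \<le> M $ i $ j) \<and> (\<forall>i. (\<Sum>j\<in>UNIV. M $ i $ j) = 1)"

definition irreducible_chain :: "real^'n::finite^'n \<Rightarrow> bool" where
  "irreducible_chain M \<longleftrightarrow> (\<forall>i j. (i, j) \<in> {(a, b). 0 < M $ a $ b}\<^sup>+)"

definition region_I :: "('n::finite \<Rightarrow> real) \<Rightarrow> (real^'n) set" where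
  "region_I r = {p \<in> belief_simplex. 0 \<le> (\<Sum>w\<in>UNIV. p $ w * r w)}"

definition phi :: "real^'n::finite^'n \<Rightarrow> real^'n \<Rightarrow> real^'n" where
  "phi M q = q v* M"

definition splittings :: "(real^'n::finite) \<Rightarrow> (real^'n) measure set" where
  "splittings p = {\<mu>. sets \<mu> = sets borel \<and> prob_space \<mu> \<and> emeasure \<mu> belief_simplex = 1
                      \<and> has_bochner_integral \<mu> (\<lambda>q. q) p}"

definition dp_objective ::
  "real^'n::finite^'n \<Rightarrow> ('n \<Rightarrow> real) \<Rightarrow> real \<Rightarrow> (real^'n \<Rightarrow> real) \<Rightarrow> (real^'n) measure \<Rightarrow> real" where
  "dp_objective M r \<delta> V \<mu> =
     (1 - \<delta>) * measure \<mu> (region_I r) + \<delta> * (\<integral>q. V (phi M q) \<partial>\<mu>)"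

definition solves_dp ::
  "real^'n::finite^'n \<Rightarrow> ('n \<Rightarrow> real) \<Rightarrow> real \<Rightarrow> (real^'n \<Rightarrow> real) \<Rightarrow> bool" where
  "solves_dp M r \<delta> V \<longleftrightarrow>
     V \<in> borel_measurable borel \<and> bounded (V ` belief_simplex) \<and>
     (\<forall>p\<in>belief_simplex. (\<exists>\<mu>\<in>splittings p. dp_objective M r \<delta> V \<mu> = V p) \<and>
                   (\<forall>\<mu>\<in>splittings p. dp_objective M r \<delta> V \<mu> \<le> V p))"

end

theory Submission
  imports Defs
begin

text \<open>Let F(q) = (1 - \<delta>) 1_I(q) + \<delta> V(phi q) be the value of inducing the posterior q. For a
  splitting \<mu> of p, the pair (p, objective of \<mu>) is the mean of q \<mapsto> (q, F q) under \<mu>, so it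
  lies in the convex hull of the graph of F; conversely every finite convex combination of
  graph points is realised by a finitely supported splitting. Hence V is concave and (p, V p)
  is a finite average of graph points. For p \<notin> I, replace the posteriors inside I by their
  average q1 (still in I, as I is convex) and those outside by their average q2: the stage
  payoff is unchanged, and by concavity of V \<circ> phi the continuation value can only increase.
  The two-point splitting (q1, q2) is therefore optimal.\<close>

lemma has_bochner_integral_inner_ge:
  fixes f :: "'b \<Rightarrow> 'a::euclidean_space"
  assumes "prob_space \<mu>" "has_bochner_integral \<mu> f m" "AE x in \<mu>. b \<le> a \<bullet> f x"
  shows "b \<le> a \<bullet> m"
proof -
  interpret prob_space \<mu> by fact
  have inner: "has_bochner_integral \<mu> (\<lambda>x. a \<bullet> f x) (a \<bullet> m)"
    using has_bochner_integral_inner_right[OF assms(2)] .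
  have "integral\<^sup>L \<mu> (\<lambda>x. b) \<le> integral\<^sup>L \<mu> (\<lambda>x. a \<bullet> f x)"
    using assms(3) integrable.intros[OF inner] by (intro integral_mono_AE) auto
  then show ?thesis
    using inner by (simp add: has_bochner_integral_integral_eq prob_space)
qed

lemma has_bochner_integral_inner_AE_eq:
  fixes f :: "'b \<Rightarrow> 'a::euclidean_space"
  assumes "prob_space \<mu>" "has_bochner_integral \<mu> f m" "AE x in \<mu>. a \<bullet> m \<le> a \<bullet> f x"
  shows "AE x in \<mu>. a \<bullet> f x = a \<bullet> m"
proof -
  interpret prob_space \<mu> by fact
  have const: "has_bochner_integral \<mu> (\<lambda>x. a \<bullet> m) (a \<bullet> m)"
    using has_bochner_integral_integrable[of \<mu> "\<lambda>x. a \<bullet> m"] by (simp add: prob_space)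
  have "has_bochner_integral \<mu> (\<lambda>x. a \<bullet> f x - a \<bullet> m) (a \<bullet> m - a \<bullet> m)"
    by (rule has_bochner_integral_diff[OF has_bochner_integral_inner_right[OF assms(2)] const])
  then have "integrable \<mu> (\<lambda>x. a \<bullet> f x - a \<bullet> m)" "integral\<^sup>L \<mu> (\<lambda>x. a \<bullet> f x - a \<bullet> m) = 0"
    by (auto simp: has_bochner_integral_iff)
  moreover have "AE x in \<mu>. 0 \<le> a \<bullet> f x - a \<bullet> m"
    using assms(3) by eventually_elim simp
  ultimately show ?thesis
    by (subst (asm) integral_nonneg_eq_0_iff_AE) auto
qed

lemma has_bochner_integral_AE_in_proper_face:
  fixes f :: "'b \<Rightarrow> 'a::euclidean_space"
  assumes "prob_space \<mu>" "has_bochner_integral \<mu> f m" "convex K" "AE x in \<mu>. f x \<in> K"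
    and "m \<in> closure K" "m \<notin> rel_interior K"
  obtains K' where "K' face_of K" "K' \<noteq> K" "AE x in \<mu>. f x \<in> K'"
proof -
  obtain a where a: "\<And>y. y \<in> closure K \<Longrightarrow> a \<bullet> m \<le> a \<bullet> y"
    "\<And>y. y \<in> rel_interior K \<Longrightarrow> a \<bullet> m < a \<bullet> y"
    using supporting_hyperplane_relative_frontier[OF assms(3,5)] assms(6) by metis
  define K' where "K' = K \<inter> {x. a \<bullet> x = a \<bullet> m}"
  have "K' face_of K"
    unfolding K'_def
    by (rule face_of_Int_supporting_hyperplane_ge) (use assms(3) a(1) closure_subset in auto)
  moreover have "K \<noteq> {}" using assms(1,4) prob_space.AE_False by force
  then obtain y where y: "y \<in> rel_interior K"
    using rel_interior_eq_empty[OF assms(3)] by blast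
  then have "K' \<noteq> K" using a(2)[OF y] rel_interior_subset by (force simp: K'_def)
  moreover have "AE x in \<mu>. a \<bullet> m \<le> a \<bullet> f x"
    using assms(4) by eventually_elim (use a(1) closure_subset in fastforce)
  then have "AE x in \<mu>. a \<bullet> f x = a \<bullet> m"
    by (rule has_bochner_integral_inner_AE_eq[OF assms(1,2)])
  then have "AE x in \<mu>. f x \<in> K'"
    using assms(4) by eventually_elim (simp add: K'_def)
  ultimately show ?thesis
    by (rule that)
qed

text \<open>Induction on the dimension of K: a mean outside the closure is excluded by a separating
  hyperplane, and a mean on the relative boundary forces the distribution onto a proper face.\<close>
lemma has_bochner_integral_in_convex:
  fixes f :: "'b \<Rightarrow> 'a::euclidean_space"
  assumes "prob_space \<mu>" "has_bochner_integral \<mu> f m" "convex K" "AE x in \<mu>. f x \<in> K"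
  shows "m \<in> K"
  using assms(3,4)
proof (induction "nat (aff_dim K + 1)" arbitrary: K rule: less_induct)
  case less
  consider "m \<notin> closure K" | "m \<in> rel_interior K" | "m \<in> closure K" "m \<notin> rel_interior K"
    by blast
  then show "m \<in> K"
  proof cases
    case 1
    then obtain a b where "a \<bullet> m < b" "\<forall>x\<in>closure K. b < a \<bullet> x"
      using separating_hyperplane_closed_point[of "closure K" m] less.prems(1)
      by (auto simp: convex_closure)
    moreover have "AE x in \<mu>. b \<le> a \<bullet> f x"
      using less.prems(2) by eventually_elim (use calculation(2) closure_subset in fastforce)
    ultimately show ?thesis
      using has_bochner_integral_inner_ge[OF assms(1,2)] by force
  next
    case 2
    then show ?thesis using rel_interior_subset by blast
  next
    case 3
    then obtain K' where K': "K' face_of K" "K' \<noteq> K" "AE x in \<mu>. f x \<in> K'"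
      using has_bochner_integral_AE_in_proper_face[OF assms(1,2) less.prems] by blast
    have "aff_dim K' < aff_dim K"
      using face_of_aff_dim_lt[OF less.prems(1) K'(1,2)] .
    then have "nat (aff_dim K' + 1) < nat (aff_dim K + 1)"
      using aff_dim_geq[of K'] by linarith
    then have "m \<in> K'"
      using less.hyps face_of_imp_convex[OF K'(1)] K'(3) by blast
    then show ?thesis using K'(1) face_of_imp_subset by blast
  qed
qed

text \<open>Unless u is a probability vector on S, embed_pmf returns an unspecified pmf.\<close>
definition weights_pmf :: "'b set \<Rightarrow> ('b \<Rightarrow> real) \<Rightarrow> 'b pmf" where
  "weights_pmf S u = embed_pmf (\<lambda>z. if z \<in> S then u z else 0)"

definition discrete_law :: "'b set \<Rightarrow> ('b \<Rightarrow> real) \<Rightarrow> ('b \<Rightarrow> 'a::euclidean_space) \<Rightarrow> 'a measure" where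
  "discrete_law S u \<pi> = distr (measure_pmf (weights_pmf S u)) borel \<pi>"

lemma sets_discrete_law: "sets (discrete_law S u \<pi>) = sets borel"
  by (simp add: discrete_law_def)

lemma prob_space_discrete_law: "prob_space (discrete_law S u \<pi>)"
  unfolding discrete_law_def
  by (rule prob_space.prob_space_distr) (auto simp: measure_pmf.prob_space_axioms)

context
  fixes S :: "'b set" and u :: "'b \<Rightarrow> real"
  assumes finite_S: "finite S" and u_nonneg: "\<And>z. z \<in> S \<Longrightarrow> 0 \<le> u z" and sum_u: "sum u S = 1"
begin

lemma pmf_weights_pmf: "pmf (weights_pmf S u) z = (if z \<in> S then u z else 0)"
  unfolding weights_pmf_def
proof (rule pmf_embed_pmf)
  have "(\<integral>\<^sup>+x. ennreal (if x \<in> S then u x else 0) \<partial>count_space UNIV)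
      = (\<integral>\<^sup>+x. ennreal (u x) * indicator S x \<partial>count_space UNIV)"
    by (intro nn_integral_cong) (auto simp: indicator_def)
  also have "\<dots> = (\<Sum>x\<in>S. ennreal (u x))"
    by (subst nn_integral_indicator_finite) (auto simp: finite_S)
  also have "\<dots> = 1" using sum_u u_nonneg by (simp add: sum_ennreal)
  finally show "(\<integral>\<^sup>+x. ennreal (if x \<in> S then u x else 0) \<partial>count_space UNIV) = 1" .
qed (use u_nonneg in auto)

lemma set_pmf_weights_pmf: "set_pmf (weights_pmf S u) \<subseteq> S"
  by (auto simp: set_pmf_eq pmf_weights_pmf split: if_splits)

lemma integral_discrete_law:
  fixes h :: "'a::euclidean_space \<Rightarrow> 'c::{banach, second_countable_topology}"
  assumes "h \<in> borel_measurable borel"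
  shows "integral\<^sup>L (discrete_law S u \<pi>) h = (\<Sum>z\<in>S. u z *\<^sub>R h (\<pi> z))"
proof -
  have "integral\<^sup>L (discrete_law S u \<pi>) h = integral\<^sup>L (measure_pmf (weights_pmf S u)) (\<lambda>z. h (\<pi> z))"
    unfolding discrete_law_def by (rule integral_distr) (auto simp: assms)
  also have "\<dots> = (\<Sum>z\<in>S. pmf (weights_pmf S u) z *\<^sub>R h (\<pi> z))"
    by (rule integral_measure_pmf[OF finite_S]) (use set_pmf_weights_pmf in auto)
  finally show ?thesis by (simp add: pmf_weights_pmf)
qed

lemma has_bochner_integral_discrete_law:
  fixes h :: "'a::euclidean_space \<Rightarrow> 'c::{banach, second_countable_topology}"
  assumes "h \<in> borel_measurable borel"
  shows "has_bochner_integral (discrete_law S u \<pi>) h (\<Sum>z\<in>S. u z *\<^sub>R h (\<pi> z))"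
proof -
  have "integrable (measure_pmf (weights_pmf S u)) (\<lambda>z. h (\<pi> z))"
    by (rule integrable_measure_pmf_finite) (use set_pmf_weights_pmf finite_S finite_subset in blast)
  then have "integrable (discrete_law S u \<pi>) h"
    unfolding discrete_law_def by (subst integrable_distr_eq) (auto simp: assms)
  then show ?thesis
    using integral_discrete_law[OF assms] by (simp add: has_bochner_integral_iff)
qed

lemma emeasure_discrete_law:
  assumes "A \<in> sets borel"
  shows "emeasure (discrete_law S u \<pi>) A = ennreal (\<Sum>z\<in>{z\<in>S. \<pi> z \<in> A}. u z)"
proof -
  have "emeasure (discrete_law S u \<pi>) A = emeasure (measure_pmf (weights_pmf S u)) (\<pi> -` A)"
    unfolding discrete_law_def by (subst emeasure_distr) (auto simp: assms)
  also have "\<dots> = emeasure (measure_pmf (weights_pmf S u)) {z\<in>S. \<pi> z \<in> A}"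
    using set_pmf_weights_pmf by (intro emeasure_eq_AE AE_pmfI) auto
  also have "\<dots> = ennreal (\<Sum>z\<in>{z\<in>S. \<pi> z \<in> A}. u z)"
    by (simp add: measure_pmf.emeasure_eq_measure measure_measure_pmf_finite finite_S pmf_weights_pmf)
  finally show ?thesis .
qed

end

definition weighted_mean :: "('a \<Rightarrow> real) \<Rightarrow> 'a set \<Rightarrow> 'a::real_vector" where
  "weighted_mean w A = (\<Sum>q\<in>A. (w q / sum w A) *\<^sub>R q)"

lemma scaleR_weighted_mean:
  assumes "sum w A \<noteq> 0"
  shows "sum w A *\<^sub>R weighted_mean w A = (\<Sum>q\<in>A. w q *\<^sub>R q)"
  using assms by (simp add: weighted_mean_def scaleR_sum_right)

lemma weighted_mean_in_convex:
  assumes "convex C" "finite A" "A \<subseteq> C" "\<And>q. q \<in> A \<Longrightarrow> 0 \<le> w q" "0 < sum w A"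
  shows "weighted_mean w A \<in> C"
  unfolding weighted_mean_def using assms
  by (intro convex_sum) (auto simp: sum_divide_distrib[symmetric])

lemma weighted_mean_Int_Diff:
  assumes "finite Q" "sum w Q = 1" "sum w (Q \<inter> C) \<noteq> 0" "sum w (Q \<inter> C) \<noteq> 1"
  shows "sum w (Q \<inter> C) *\<^sub>R weighted_mean w (Q \<inter> C) + (1 - sum w (Q \<inter> C)) *\<^sub>R weighted_mean w (Q - C)
    = (\<Sum>q\<in>Q. w q *\<^sub>R q)"
proof -
  have "sum w (Q - C) = 1 - sum w (Q \<inter> C)"
    using sum.Int_Diff[OF assms(1), of w C] assms(2) by simp
  then show ?thesis
    using assms(3,4) scaleR_weighted_mean[of w "Q \<inter> C"] scaleR_weighted_mean[of w "Q - C"]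
      sum.Int_Diff[OF assms(1), of "\<lambda>q. w q *\<^sub>R q" C]
    by simp
qed

lemma sum_weights_in_convex_less_1:
  assumes "convex C" "finite Q" "\<And>q. q \<in> Q \<Longrightarrow> 0 \<le> w q" "sum w Q = 1"
    and "(\<Sum>q\<in>Q. w q *\<^sub>R q) \<notin> C"
  shows "sum w (Q \<inter> C) < 1"
proof (rule ccontr)
  assume "\<not> sum w (Q \<inter> C) < 1"
  moreover have split: "sum g Q = sum g (Q \<inter> C) + sum g (Q - C)" for g :: "_ \<Rightarrow> 'b::comm_monoid_add"
    using assms(2) by (rule sum.Int_Diff)
  moreover have "0 \<le> sum w (Q - C)" using assms(3) by (auto intro: sum_nonneg)
  ultimately have one: "sum w (Q \<inter> C) = 1" and "sum w (Q - C) = 0"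
    using assms(4) split[of w] by auto
  then have "\<forall>q\<in>Q - C. w q = 0"
    using assms(2,3) by (subst (asm) sum_nonneg_eq_0_iff) auto
  then have "(\<Sum>q\<in>Q. w q *\<^sub>R q) = weighted_mean w (Q \<inter> C)"
    using split[of "\<lambda>q. w q *\<^sub>R q"] scaleR_weighted_mean[of w "Q \<inter> C"] one by simp
  moreover have "weighted_mean w (Q \<inter> C) \<in> C"
    using assms(1-3) one by (intro weighted_mean_in_convex) auto
  ultimately show False using assms(5) by simp
qed

lemma closed_belief_simplex: "closed (belief_simplex :: (real^'n::finite) set)"
proof -
  have "belief_simplex = (\<Inter>i. {p::real^'n. 0 \<le> p $ i}) \<inter> {p. (\<Sum>i\<in>UNIV. p $ i) = 1}"
    by (auto simp: belief_simplex_def)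
  also have "closed \<dots>"
    by (intro closed_Int closed_INT ballI closed_Collect_le closed_Collect_eq continuous_intros)
  finally show ?thesis .
qed

lemma belief_simplex_borel[measurable]: "(belief_simplex :: (real^'n::finite) set) \<in> sets borel"
  using closed_belief_simplex by (rule borel_closed)

lemma convex_belief_simplex: "convex (belief_simplex :: (real^'n::finite) set)"
  unfolding convex_def belief_simplex_def
  by (auto simp: sum.distrib sum_distrib_left[symmetric])

lemma region_I_eq: "region_I r = belief_simplex \<inter> {p. 0 \<le> (\<Sum>w\<in>UNIV. p $ w * r w)}"
  by (auto simp: region_I_def)

lemma region_I_borel[measurable]: "(region_I r :: (real^'n::finite) set) \<in> sets borel"
  unfolding region_I_eq
  by (intro borel_closed closed_Int closed_belief_simplex closed_Collect_le continuous_intros)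

lemma convex_region_I: "convex (region_I r :: (real^'n::finite) set)"
  unfolding region_I_eq
proof (rule convex_Int[OF convex_belief_simplex])
  show "convex {p::real^'n. 0 \<le> (\<Sum>w\<in>UNIV. p $ w * r w)}"
    unfolding convex_def
    by (auto simp: sum.distrib distrib_right sum_distrib_left[symmetric] mult.assoc)
qed

lemma bounded_linear_phi: "bounded_linear (phi M)"
proof -
  have phi_eq: "phi M = (\<lambda>x. transpose M *v x)" by (auto simp: phi_def)
  show ?thesis unfolding phi_eq by simp
qed

lemma phi_borel[measurable]: "phi M \<in> borel_measurable borel"
  using bounded_linear_phi by (intro borel_measurable_continuous_onI linear_continuous_on)

lemma phi_sum: "phi M (\<Sum>i\<in>A. c i *\<^sub>R x i) = (\<Sum>i\<in>A. c i *\<^sub>R phi M (x i))"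
  by (simp add: linear_sum[OF bounded_linear.linear[OF bounded_linear_phi]]
    linear_scale[OF bounded_linear.linear[OF bounded_linear_phi]])

lemma phi_in_belief_simplex:
  assumes "stochastic_matrix M" "q \<in> belief_simplex"
  shows "phi M q \<in> belief_simplex"
proof -
  have component: "phi M q $ j = (\<Sum>i\<in>UNIV. q $ i * M $ i $ j)" for j
    by (simp add: phi_def vector_matrix_mult_def)
  have "0 \<le> phi M q $ j" for j
    unfolding component using assms
    by (auto simp: stochastic_matrix_def belief_simplex_def intro!: sum_nonneg)
  moreover have "(\<Sum>j\<in>UNIV. phi M q $ j) = (\<Sum>i\<in>UNIV. q $ i * (\<Sum>j\<in>UNIV. M $ i $ j))"
    unfolding component by (subst sum.swap) (simp add: sum_distrib_left)
  moreover have "\<dots> = 1" using assms by (simp add: stochastic_matrix_def belief_simplex_def)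
  ultimately show ?thesis by (simp add: belief_simplex_def)
qed

lemma splittingsD:
  assumes "\<mu> \<in> splittings p"
  shows "sets \<mu> = sets borel" "space \<mu> = UNIV" "prob_space \<mu>"
    "AE q in \<mu>. q \<in> belief_simplex" "has_bochner_integral \<mu> (\<lambda>q. q) p"
proof -
  show sets: "sets \<mu> = sets borel" and prob: "prob_space \<mu>"
    and "has_bochner_integral \<mu> (\<lambda>q. q) p"
    using assms by (auto simp: splittings_def)
  show "space \<mu> = UNIV" using sets_eq_imp_space_eq[OF sets] by simp
  interpret prob_space \<mu> by (fact prob)
  show "AE q in \<mu>. q \<in> belief_simplex"
    using assms AE_in_set_eq_1[of belief_simplex] sets by (simp add: splittings_def emeasure_eq_measure)
qed

lemma discrete_law_in_splittings:
  assumes "finite S" "\<And>z. z \<in> S \<Longrightarrow> 0 \<le> u z" "sum u S = 1"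
    and "\<And>z. z \<in> S \<Longrightarrow> \<pi> z \<in> belief_simplex"
  shows "discrete_law S u \<pi> \<in> splittings (\<Sum>z\<in>S. u z *\<^sub>R \<pi> z)"
proof -
  have "emeasure (discrete_law S u \<pi>) belief_simplex = ennreal (\<Sum>z\<in>{z\<in>S. \<pi> z \<in> belief_simplex}. u z)"
    using assms(1-3) belief_simplex_borel by (rule emeasure_discrete_law)
  also have "{z\<in>S. \<pi> z \<in> belief_simplex} = S" using assms(4) by auto
  finally have "emeasure (discrete_law S u \<pi>) belief_simplex = 1" using assms(3) by simp
  moreover have "has_bochner_integral (discrete_law S u \<pi>) (\<lambda>q. q) (\<Sum>z\<in>S. u z *\<^sub>R \<pi> z)"
    using has_bochner_integral_discrete_law[OF assms(1-3), of "\<lambda>q. q"] by simp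
  ultimately show ?thesis
    unfolding splittings_def by (simp add: sets_discrete_law prob_space_discrete_law)
qed

locale dp_solution =
  fixes M :: "real^'n::finite^'n" and r :: "'n \<Rightarrow> real" and \<delta> :: real and V :: "real^'n \<Rightarrow> real"
  assumes stochastic: "stochastic_matrix M" and \<delta>_nonneg: "0 \<le> \<delta>" and \<delta>_less_1: "\<delta> < 1"
    and solves: "solves_dp M r \<delta> V"
begin

definition posterior_value :: "real^'n \<Rightarrow> real" where
  "posterior_value q = (1 - \<delta>) * indicator (region_I r) q + \<delta> * V (phi M q)"

definition posterior_value_graph :: "((real^'n) \<times> real) set" where
  "posterior_value_graph = (\<lambda>q. (q, posterior_value q)) ` belief_simplex"

lemma V_borel[measurable]: "V \<in> borel_measurable borel"
  using solves by (simp add: solves_dp_def)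

lemma posterior_value_borel[measurable]: "posterior_value \<in> borel_measurable borel"
  unfolding posterior_value_def by measurable

lemma V_optimal: "p \<in> belief_simplex \<Longrightarrow> \<mu> \<in> splittings p \<Longrightarrow> dp_objective M r \<delta> V \<mu> \<le> V p"
  using solves by (simp add: solves_dp_def)

lemma V_attained:
  assumes "p \<in> belief_simplex"
  obtains \<mu> where "\<mu> \<in> splittings p" "dp_objective M r \<delta> V \<mu> = V p"
  using solves assms by (auto simp: solves_dp_def)

lemma has_bochner_integral_posterior_value:
  assumes "\<mu> \<in> splittings p"
  shows "has_bochner_integral \<mu> posterior_value (dp_objective M r \<delta> V \<mu>)"
proof -
  note \<mu> = splittingsD[OF assms]
  interpret prob_space \<mu> by (fact \<mu>(3))
  obtain B where B: "\<And>q. q \<in> belief_simplex \<Longrightarrow> norm (V q) \<le> B"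
    using solves by (auto simp: solves_dp_def bounded_iff)
  have measurable_\<mu>: "measurable \<mu> borel = measurable borel borel"
    by (rule measurable_cong_sets[OF \<mu>(1) refl])
  have "integrable \<mu> (\<lambda>q. V (phi M q))"
  proof (rule integrable_const_bound[where B=B])
    show "AE q in \<mu>. norm (V (phi M q)) \<le> B"
      using \<mu>(4) by eventually_elim (use B phi_in_belief_simplex[OF stochastic] in auto)
  qed (simp add: measurable_\<mu>)
  moreover have "integrable \<mu> (indicator (region_I r) :: _ \<Rightarrow> real)"
    by (rule integrable_const_bound[where B=1]) (auto simp: measurable_\<mu>)
  ultimately show ?thesis
    unfolding posterior_value_def dp_objective_def
    by (simp add: has_bochner_integral_iff \<mu>(2))
qed

lemma dp_objective_discrete_law:
  assumes "finite S" "\<And>z. z \<in> S \<Longrightarrow> 0 \<le> u z" "sum u S = 1"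
    and "\<And>z. z \<in> S \<Longrightarrow> \<pi> z \<in> belief_simplex"
  shows "dp_objective M r \<delta> V (discrete_law S u \<pi>) = (\<Sum>z\<in>S. u z * posterior_value (\<pi> z))"
  using has_bochner_integral_posterior_value[OF discrete_law_in_splittings[of S u \<pi>, OF assms]]
    has_bochner_integral_discrete_law[OF assms(1-3) posterior_value_borel, of \<pi>]
  by (simp add: has_bochner_integral_eq)

lemma splitting_in_convex_hull:
  assumes "\<mu> \<in> splittings p"
  shows "(p, dp_objective M r \<delta> V \<mu>) \<in> convex hull posterior_value_graph"
proof (rule has_bochner_integral_in_convex[OF splittingsD(3)[OF assms]])
  note \<mu> = splittingsD[OF assms]
  show "has_bochner_integral \<mu> (\<lambda>q. (q, posterior_value q)) (p, dp_objective M r \<delta> V \<mu>)"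
    using has_bochner_integral_add[OF
        has_bochner_integral_bounded_linear[OF bounded_linear_Pair[OF bounded_linear_ident bounded_linear_zero] \<mu>(5)]
        has_bochner_integral_bounded_linear[OF bounded_linear_Pair[OF bounded_linear_zero bounded_linear_ident]
          has_bochner_integral_posterior_value[OF assms]]]
    by simp
  show "AE q in \<mu>. (q, posterior_value q) \<in> convex hull posterior_value_graph"
    using \<mu>(4) by eventually_elim (auto simp: posterior_value_graph_def intro: hull_inc)
qed (rule convex_convex_hull)

lemma convex_hull_below_V:
  assumes "(y, s) \<in> convex hull posterior_value_graph"
  shows "s \<le> V y"
proof -
  obtain T u where T: "finite T" "T \<subseteq> posterior_value_graph" "\<And>x. x \<in> T \<Longrightarrow> 0 \<le> u x" "sum u T = 1"
    and comb: "(\<Sum>v\<in>T. u v *\<^sub>R v) = (y, s)"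
    using assms unfolding convex_hull_explicit by blast
  have fst_T: "\<And>v. v \<in> T \<Longrightarrow> fst v \<in> belief_simplex"
    and snd_T: "\<And>v. v \<in> T \<Longrightarrow> snd v = posterior_value (fst v)"
    using T(2) by (auto simp: posterior_value_graph_def)
  have y: "y = (\<Sum>v\<in>T. u v *\<^sub>R fst v)" and s: "s = (\<Sum>v\<in>T. u v * posterior_value (fst v))"
    using arg_cong[OF comb, of fst] arg_cong[OF comb, of snd] by (simp_all add: fst_sum snd_sum snd_T)
  have "y \<in> belief_simplex"
    unfolding y by (rule convex_sum[OF T(1) convex_belief_simplex T(4) T(3) fst_T])
  moreover have "discrete_law T u fst \<in> splittings y"
    unfolding y using T(1,3,4) fst_T by (rule discrete_law_in_splittings)
  ultimately show ?thesis
    using V_optimal dp_objective_discrete_law[OF T(1,3,4) fst_T] s by fastforce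
qed

lemma V_graph_in_convex_hull:
  assumes "y \<in> belief_simplex"
  shows "(y, V y) \<in> convex hull posterior_value_graph"
  using V_attained[OF assms] splitting_in_convex_hull by metis

lemma V_concave:
  assumes "finite A" "\<And>i. i \<in> A \<Longrightarrow> 0 \<le> w i" "sum w A = 1" "\<And>i. i \<in> A \<Longrightarrow> y i \<in> belief_simplex"
  shows "(\<Sum>i\<in>A. w i * V (y i)) \<le> V (\<Sum>i\<in>A. w i *\<^sub>R y i)"
proof -
  have "(\<Sum>i\<in>A. w i *\<^sub>R (y i, V (y i))) \<in> convex hull posterior_value_graph"
    using assms V_graph_in_convex_hull by (intro convex_sum convex_convex_hull) auto
  moreover have "(\<Sum>i\<in>A. w i *\<^sub>R (y i, V (y i))) = ((\<Sum>i\<in>A. w i *\<^sub>R y i), (\<Sum>i\<in>A. w i * V (y i)))"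
    by (simp add: prod_eq_iff fst_sum snd_sum)
  ultimately show ?thesis using convex_hull_below_V by metis
qed

lemma V_phi_concave:
  assumes "finite A" "A \<subseteq> belief_simplex" "\<And>q. q \<in> A \<Longrightarrow> 0 \<le> w q" "0 < sum w A"
  shows "(\<Sum>q\<in>A. w q * V (phi M q)) \<le> sum w A * V (phi M (weighted_mean w A))"
proof -
  have "(\<Sum>q\<in>A. (w q / sum w A) * V (phi M q)) \<le> V (\<Sum>q\<in>A. (w q / sum w A) *\<^sub>R phi M q)"
    using assms phi_in_belief_simplex[OF stochastic]
    by (intro V_concave) (auto simp: sum_divide_distrib[symmetric])
  then show ?thesis
    using assms(4)
    by (simp add: weighted_mean_def phi_sum sum_divide_distrib[symmetric] pos_divide_le_eq mult.commute)
qed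

lemma sum_posterior_value:
  assumes "finite Q"
  shows "(\<Sum>q\<in>Q. w q * posterior_value q)
    = (1 - \<delta>) * sum w (Q \<inter> region_I r) + \<delta> * (\<Sum>q\<in>Q. w q * V (phi M q))"
proof -
  have "(\<Sum>q\<in>Q. w q * posterior_value q)
      = (\<Sum>q\<in>Q. (1 - \<delta>) * (w q * indicator (region_I r) q) + \<delta> * (w q * V (phi M q)))"
    unfolding posterior_value_def by (intro sum.cong) (simp_all add: distrib_left mult.left_commute)
  also have "\<dots> = (1 - \<delta>) * (\<Sum>q\<in>Q. w q * indicator (region_I r) q) + \<delta> * (\<Sum>q\<in>Q. w q * V (phi M q))"
    by (simp add: sum.distrib sum_distrib_left)
  also have "(\<Sum>q\<in>Q. w q * indicator (region_I r) q) = sum w (Q \<inter> region_I r)"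
    using assms by (simp add: sum.inter_restrict indicator_def)
  finally show ?thesis .
qed

lemma V_finite_average:
  assumes "y \<in> belief_simplex"
  obtains Q w where "finite Q" "Q \<subseteq> belief_simplex" "\<And>q. q \<in> Q \<Longrightarrow> 0 \<le> w q" "sum w Q = 1"
    "(\<Sum>q\<in>Q. w q *\<^sub>R q) = y" "(\<Sum>q\<in>Q. w q * posterior_value q) = V y"
proof -
  obtain T u where T: "finite T" "T \<subseteq> posterior_value_graph" "\<And>x. x \<in> T \<Longrightarrow> 0 \<le> u x"
    "sum u T = 1" and comb: "(\<Sum>v\<in>T. u v *\<^sub>R v) = (y, V y)"
    using V_graph_in_convex_hull[OF assms] unfolding convex_hull_explicit by blast
  define w where "w q = u (q, posterior_value q)" for q
  have fst_T: "\<And>v. v \<in> T \<Longrightarrow> fst v \<in> belief_simplex"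
    and snd_T: "\<And>v. v \<in> T \<Longrightarrow> snd v = posterior_value (fst v)"
    using T(2) by (auto simp: posterior_value_graph_def)
  then have inj: "inj_on fst T" by (metis inj_onI prod_eqI)
  have u_w: "\<And>v. v \<in> T \<Longrightarrow> u v = w (fst v)"
    unfolding w_def using snd_T by (metis prod.collapse)
  have reindex: "sum g (fst ` T) = (\<Sum>v\<in>T. g (fst v))" for g :: "_ \<Rightarrow> 'a::comm_monoid_add"
    by (simp add: sum.reindex[OF inj])
  show ?thesis
  proof (rule that[of "fst ` T" w])
    show "sum w (fst ` T) = 1" using T(4) u_w by (simp add: reindex)
    show "(\<Sum>q\<in>fst ` T. w q *\<^sub>R q) = y" "(\<Sum>q\<in>fst ` T. w q * posterior_value q) = V y"
      using arg_cong[OF comb, of fst] arg_cong[OF comb, of snd] snd_T u_w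
      by (simp_all add: reindex fst_sum snd_sum)
  qed (use T(1,3) fst_T u_w in auto)
qed

lemma two_point_splitting:
  assumes "q1 \<in> belief_simplex" "q2 \<in> belief_simplex" "0 \<le> t" "t \<le> 1"
  obtains \<nu> where "\<nu> \<in> splittings (t *\<^sub>R q1 + (1 - t) *\<^sub>R q2)" "emeasure \<nu> {q1, q2} = 1"
    "dp_objective M r \<delta> V \<nu> = t * posterior_value q1 + (1 - t) * posterior_value q2"
proof -
  define u where "u b = (if b then t else 1 - t)" for b
  define \<pi> where "\<pi> b = (if b then q1 else q2)" for b
  have u: "finite (UNIV :: bool set)" "\<And>b. b \<in> UNIV \<Longrightarrow> 0 \<le> u b" "sum u UNIV = 1"
    using assms(3,4) by (auto simp: u_def UNIV_bool)
  have \<pi>: "\<And>b. b \<in> UNIV \<Longrightarrow> \<pi> b \<in> belief_simplex" using assms(1,2) by (simp add: \<pi>_def)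
  have "emeasure (discrete_law UNIV u \<pi>) {q1, q2} = ennreal (\<Sum>b\<in>{b\<in>UNIV. \<pi> b \<in> {q1, q2}}. u b)"
    using emeasure_discrete_law[OF u, of "{q1, q2}" \<pi>] by (simp add: borel_closed finite_imp_closed)
  also have "{b\<in>UNIV. \<pi> b \<in> {q1, q2}} = UNIV" by (auto simp: \<pi>_def)
  finally have "emeasure (discrete_law UNIV u \<pi>) {q1, q2} = 1" using u(3) by simp
  moreover have "(\<Sum>b\<in>UNIV. u b *\<^sub>R \<pi> b) = t *\<^sub>R q1 + (1 - t) *\<^sub>R q2"
    and "(\<Sum>b\<in>UNIV. u b * posterior_value (\<pi> b)) = t * posterior_value q1 + (1 - t) * posterior_value q2"
    by (simp_all add: UNIV_bool u_def \<pi>_def)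
  ultimately show ?thesis
    using that discrete_law_in_splittings[of UNIV u \<pi>, OF u \<pi>] dp_objective_discrete_law[of UNIV u \<pi>, OF u \<pi>]
    by metis
qed

lemma V_le_group_averages:
  assumes Q: "finite Q" "Q \<subseteq> belief_simplex" "\<And>q. q \<in> Q \<Longrightarrow> 0 \<le> w q" "sum w Q = 1"
    and average: "(\<Sum>q\<in>Q. w q * posterior_value q) = V p"
    and t: "t = sum w (Q \<inter> region_I r)" "0 < t" "t < 1"
  shows "V p \<le> t * posterior_value (weighted_mean w (Q \<inter> region_I r))
    + (1 - t) * posterior_value (weighted_mean w (Q - region_I r))"
proof -
  define q1 where "q1 = weighted_mean w (Q \<inter> region_I r)"
  define q2 where "q2 = weighted_mean w (Q - region_I r)"
  have split: "sum g Q = sum g (Q \<inter> region_I r) + sum g (Q - region_I r)" for g :: "_ \<Rightarrow> real"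
    using Q(1) by (rule sum.Int_Diff)
  have sum_outside: "sum w (Q - region_I r) = 1 - t"
    using split[of w] Q(4) t(1) by simp
  have q1: "q1 \<in> region_I r"
    unfolding q1_def using Q t by (intro weighted_mean_in_convex[OF convex_region_I]) auto
  have inside: "(\<Sum>q\<in>Q \<inter> region_I r. w q * V (phi M q)) \<le> t * V (phi M q1)"
    unfolding q1_def t(1) using Q t by (intro V_phi_concave) (auto simp: region_I_def)
  have outside: "(\<Sum>q\<in>Q - region_I r. w q * V (phi M q)) \<le> (1 - t) * V (phi M q2)"
    unfolding q2_def sum_outside[symmetric] using Q t sum_outside by (intro V_phi_concave) auto
  have "V p = (1 - \<delta>) * t + \<delta> * (\<Sum>q\<in>Q. w q * V (phi M q))"
    using sum_posterior_value[OF Q(1)] average t(1) by simp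
  also have "\<dots> \<le> (1 - \<delta>) * t + \<delta> * (t * V (phi M q1) + (1 - t) * V (phi M q2))"
    unfolding split[of "\<lambda>q. w q * V (phi M q)"]
    using inside outside \<delta>_nonneg by (intro add_left_mono mult_left_mono add_mono)
  also have "\<dots> = t * posterior_value q1 + (1 - t) * (\<delta> * V (phi M q2))"
    using q1 by (simp add: posterior_value_def algebra_simps)
  also have "\<dots> \<le> t * posterior_value q1 + (1 - t) * posterior_value q2"
    using t \<delta>_less_1 by (intro add_left_mono mult_left_mono) (auto simp: posterior_value_def)
  finally show ?thesis unfolding q1_def q2_def .
qed

text \<open>If no weight lies in I, the trivial splitting at p is already optimal.\<close>
lemma V_le_two_point_value:
  assumes p: "p \<in> belief_simplex" "p \<notin> region_I r"
  obtains q1 q2 t where "q1 \<in> belief_simplex" "q2 \<in> belief_simplex" "0 \<le> t" "t \<le> 1"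
    "t *\<^sub>R q1 + (1 - t) *\<^sub>R q2 = p" "V p \<le> t * posterior_value q1 + (1 - t) * posterior_value q2"
proof -
  obtain Q w where Q: "finite Q" "Q \<subseteq> belief_simplex" "\<And>q. q \<in> Q \<Longrightarrow> 0 \<le> w q" "sum w Q = 1"
    and mean: "(\<Sum>q\<in>Q. w q *\<^sub>R q) = p" and average: "(\<Sum>q\<in>Q. w q * posterior_value q) = V p"
    using V_finite_average[OF p(1)] by blast
  define t where "t = sum w (Q \<inter> region_I r)"
  have "t < 1"
    unfolding t_def
    by (rule sum_weights_in_convex_less_1[OF convex_region_I Q(1)]) (use Q(3,4) mean p(2) in auto)
  show ?thesis
  proof (cases "t = 0")
    case True
    have "(\<Sum>q\<in>Q. w q * V (phi M q)) \<le> V (phi M p)"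
      using V_phi_concave[of Q w, OF Q(1,2,3)] Q(4) mean by (simp add: weighted_mean_def)
    then have "V p \<le> \<delta> * V (phi M p)"
      using sum_posterior_value[OF Q(1), of w] average True \<delta>_nonneg by (simp add: t_def mult_left_mono)
    then show ?thesis using that[of p p 0] p by (simp add: posterior_value_def)
  next
    case False
    moreover have "0 \<le> t" unfolding t_def using Q(3) by (auto intro: sum_nonneg)
    ultimately have t: "0 < t" "t < 1" using \<open>t < 1\<close> by auto
    show ?thesis
    proof (rule that)
      show "weighted_mean w (Q \<inter> region_I r) \<in> belief_simplex"
        using Q t unfolding t_def by (intro weighted_mean_in_convex[OF convex_belief_simplex]) auto
      show "weighted_mean w (Q - region_I r) \<in> belief_simplex"
        using Q t
        by (intro weighted_mean_in_convex[OF convex_belief_simplex])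
           (auto simp: sum.Int_Diff[OF Q(1), of w "region_I r"] t_def)
      show "t *\<^sub>R weighted_mean w (Q \<inter> region_I r) + (1 - t) *\<^sub>R weighted_mean w (Q - region_I r) = p"
        using weighted_mean_Int_Diff[OF Q(1,4), of "region_I r"] t mean unfolding t_def by simp
    qed (use t V_le_group_averages[OF Q average t_def t] in auto)
  qed
qed

theorem exists_optimal_two_point_splitting:
  assumes "p \<in> belief_simplex - region_I r"
  shows "\<exists>\<mu>\<in>splittings p. (\<exists>a b. emeasure \<mu> {a, b} = 1) \<and> dp_objective M r \<delta> V \<mu> = V p"
proof -
  obtain q1 q2 t where q: "q1 \<in> belief_simplex" "q2 \<in> belief_simplex" "0 \<le> t" "t \<le> 1"
    and p: "t *\<^sub>R q1 + (1 - t) *\<^sub>R q2 = p"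
    and le: "V p \<le> t * posterior_value q1 + (1 - t) * posterior_value q2"
    using V_le_two_point_value assms by blast
  obtain \<nu> where \<nu>: "\<nu> \<in> splittings p" "emeasure \<nu> {q1, q2} = 1"
    and obj: "dp_objective M r \<delta> V \<nu> = t * posterior_value q1 + (1 - t) * posterior_value q2"
    using two_point_splitting[OF q] unfolding p by blast
  have "dp_objective M r \<delta> V \<nu> = V p"
    using V_optimal[OF _ \<nu>(1)] assms obj le by fastforce
  then show ?thesis using \<nu> by blast
qed

end

theorem corollary2:
  fixes M :: "real^'n::finite^'n" and r :: "'n \<Rightarrow> real" and \<delta> :: real
    and V :: "real^'n \<Rightarrow> real" and p :: "real^'n"
  assumes "stochastic_matrix M" and "irreducible_chain M"
    and "0 \<le> \<delta>" and "\<delta> < 1"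
    and "solves_dp M r \<delta> V"
    and "p \<in> belief_simplex - region_I r"
  shows "\<exists>\<mu>\<in>splittings p. (\<exists>a b. emeasure \<mu> {a, b} = 1)
           \<and> dp_objective M r \<delta> V \<mu> = V p"
proof -
  interpret dp_solution M r \<delta> V
    using assms(1,3-5) by unfold_locales
  show ?thesis using assms(6) by (rule exists_optimal_two_point_splitting)
qed

end
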